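(* Let $H\Gamma=(C,\{\mathcal W,\mathcal X,\mathcal Y,\mathcal Z\},G_{zx},G_{wy})$ be a Lagrangian hypercube diagram. Then $H\Gamma$ determines an immersed torus $i:T=S^1\times S^1\to\mathbb{R}^4$ which is Lagrangian with respect to $\omega=dw\wedge dy+dz\wedge dx$; moreover the loops $\gamma_{zx}=S^1\times\{1\}$ and $\gamma_{wy}=\{1\}\times S^1$ map under $i$ to curves projecting to the Lagrangian grid diagrams $G_{zx}$ and $G_{wy}$ respectively.
   Context: Grid conventions. In a plane with coordinates $(a,b)$ (below $(a,b)=(w,y)$ or $(a,b)=(z,x)$), an immersed grid diagram of size $n$ is an $n\times n$ grid of unit cells in $[0,n]^2$ with two kinds of markings at centers of cells, each row and each column containing exactly one marking of each kind; joining each marking of the first kind to the marking of the second kind in its row by an $a$-parallel segment, and each marking of the second kind to the marking of the first kind in its column by a $b$-parallel segment, gives an oriented connected closed piecewise-linear curve, with no crossing information, viewed as an immersion $\gamma:\mathbb{R}/2\pi\mathbb{Z}\to\mathbb{R}^2$, $\theta\mapsto(a(\theta),b(\theta))$. It is a Lagrangian grid diagram if (1) $\int_0^{2\pi}b\,a'\,d\theta=0$ and (2) $\int_{\theta_0}^{\theta_1}b\,a'\,d\theta\neq0$ whenever $\theta_0\neq\theta_1$ and $\gamma(\theta_0)=\gamma(\theta_1)$. For a crossing $c=\gamma(\theta_0)=\gamma(\theta_1)$ put $|\Delta t(c)|=|\int_{\theta_0}^{\theta_1}b\,a'\,d\theta|$. Hypercube diagrams. Let $C=[0,n]^4$ with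 coordinates $(w,x,y,z)$. A flat is a product in which two coordinates range over $[0,n]$ and the other two over unit intervals $[k,k+1]$, named by its two full coordinates; a cube is a product in which three coordinates range over $[0,n]$ and one over a unit interval. Markings are points with coordinates in $\mathbb{Z}+\frac12$ labelled $W,X,Y,Z$. Marking conditions: each cube contains exactly one marking of each label; each cube contains exactly two flats containing exactly three markings; in each such flat the three markings form a right angle with rays parallel to coordinate axes; its vertex is $W$ iff the flat is a $zw$-flat, $X$ iff a $wx$-flat, $Y$ iff an $xy$-flat, $Z$ iff a $yz$-flat. Join each $W$ to an $X$ by a $w$-parallel segment, each $X$ to a $Y$ by an $x$-parallel segment, each $Y$ to a $Z$ by a $y$-parallel segment and each $Z$ to a $W$ by a $z$-parallel segment; the projections of this curve to the $(w,y)$- and $(z,x)$-planes are immersed grid diagrams $G_{wy}$ ($(a,b)=(w,y)$) and $G_{zx}$ ($(a,b)=(z,x)$). $H\Gamma$ is a Lagrangian hypercube diagram if the marking conditions hold, $G_{wy},G_{zx}$ are Lagrangian grid diagrams, and $|\Delta t(c)|\neq|\Delta t(c')|$ for all crossings $c$ of $G_{zx}$ and $c'$ of $G_{wy}$. The torus determined by $H\Gamma$ is obtained by placing a copy of $G_{zx}$ in each $zx$-flat whose $(w,y)$-cell contains a marking of $G_{wy}$ and joining these copies by the tubes swept out by translating them parallel to the $w$- and $y$-axes along the edges of $G_{wy}$; i.e. with $G_{zx}$ parametrized by $s\mapsto(z(s),x(s))$ and $G_{wy}$ by $u\mapsto(w(u),y(u))$, $i(s,u)=(w(u),x(s),y(u),z(s))$.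 *)

theory Defs
  imports "HOL-Analysis.Analysis"
begin

type_synonym pt4 = "real \<times> real \<times> real \<times> real"

datatype axis = Aw | Ax | Ay | Az

datatype label = LW | LX | LY | LZ

definition coord :: "pt4 \<Rightarrow> axis \<Rightarrow> real" where
  "coord p a = (case p of (w, x, y, z) \<Rightarrow>
     (case a of Aw \<Rightarrow> w | Ax \<Rightarrow> x | Ay \<Rightarrow> y | Az \<Rightarrow> z))"

definition is_center :: "nat \<Rightarrow> real \<Rightarrow> bool" where
  "is_center n t \<longleftrightarrow> (\<exists>k::nat. k < n \<and> t = real k + 1/2)"

definition markings :: "(label \<Rightarrow> pt4 set) \<Rightarrow> (label \<times> pt4) set" where
  "markings M = {(l, p). p \<in> M l}"

text \<open>Labelled markings in the flat where axis a ranges over [k,k+1] and axis b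
  over [j,j+1] (the other two axes range over [0,n]).\<close>
definition flat_marks ::
  "(label \<Rightarrow> pt4 set) \<Rightarrow> axis \<Rightarrow> nat \<Rightarrow> axis \<Rightarrow> nat \<Rightarrow> (label \<times> pt4) set" where
  "flat_marks M a k b j =
     {(l, p) \<in> markings M. coord p a = real k + 1/2 \<and> coord p b = real j + 1/2}"

text \<open>The two full axes of the flat of the vertex of the right angle:
  W: zw-flat, X: wx-flat, Y: xy-flat, Z: yz-flat.\<close>
fun vertex_axes :: "label \<Rightarrow> axis set" where
  "vertex_axes LW = {Az, Aw}"
| "vertex_axes LX = {Aw, Ax}"
| "vertex_axes LY = {Ax, Ay}"
| "vertex_axes LZ = {Ay, Az}"

definition right_angle :: "pt4 \<Rightarrow> pt4 \<Rightarrow> pt4 \<Rightarrow> axis \<Rightarrow> axis \<Rightarrow> bool" where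
  "right_angle v p q c d \<longleftrightarrow> p \<noteq> v \<and> q \<noteq> v \<and>
     (\<forall>e. e \<noteq> c \<longrightarrow> coord p e = coord v e) \<and>
     (\<forall>e. e \<noteq> d \<longrightarrow> coord q e = coord v e)"

definition marking_conditions :: "nat \<Rightarrow> (label \<Rightarrow> pt4 set) \<Rightarrow> bool" where
  "marking_conditions n M \<longleftrightarrow>
     (\<forall>l. \<forall>p \<in> M l. \<forall>a. is_center n (coord p a)) \<and>
     \<comment> \<open>each cube contains exactly one marking of each label\<close>
     (\<forall>a k l. k < n \<longrightarrow> card {p \<in> M l. coord p a = real k + 1/2} = 1) \<and>
     \<comment> \<open>each cube contains exactly two flats containing exactly three markings\<close>
     (\<forall>a k. k < n \<longrightarrow>
        card {(b, j). b \<noteq> a \<and> j < n \<and> card (flat_marks M a k b j) = 3} = 2) \<and>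
     \<comment> \<open>in each such flat the markings form a right angle with the prescribed vertex\<close>
     (\<forall>a k b j. a \<noteq> b \<and> k < n \<and> j < n \<and> card (flat_marks M a k b j) = 3 \<longrightarrow>
        (\<exists>l v l1 p1 l2 p2 c d.
           flat_marks M a k b j = {(l, v), (l1, p1), (l2, p2)} \<and>
           c \<noteq> d \<and> - {a, b} = {c, d} \<and> vertex_axes l = {c, d} \<and>
           right_angle v p1 p2 c d))"

definition label_of :: "nat \<Rightarrow> label" where
  "label_of j = (case j mod 4 of 0 \<Rightarrow> LW | Suc 0 \<Rightarrow> LX | Suc (Suc 0) \<Rightarrow> LY | _ \<Rightarrow> LZ)"

definition axis_of :: "nat \<Rightarrow> axis" where
  "axis_of j = (case j mod 4 of 0 \<Rightarrow> Aw | Suc 0 \<Rightarrow> Ax | Suc (Suc 0) \<Rightarrow> Ay | _ \<Rightarrow> Az)"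

text \<open>v 0, v 1, ..., v (4n-1) is the cyclic (oriented) order in which the closed curve
  W -> X -> Y -> Z -> W -> ... visits the markings: every labelled marking is visited
  exactly once, and v j is joined to v (j+1) by a segment parallel to the w-, x-, y-
  or z-axis according as v j is a W, X, Y or Z marking.\<close>
definition hc_cycle :: "nat \<Rightarrow> (label \<Rightarrow> pt4 set) \<Rightarrow> (nat \<Rightarrow> pt4) \<Rightarrow> bool" where
  "hc_cycle n M v \<longleftrightarrow> 0 < n \<and>
     bij_betw (\<lambda>j. (label_of j, v j)) {..<4*n} (markings M) \<and>
     (\<forall>j < 4*n. \<forall>e. e \<noteq> axis_of j \<longrightarrow> coord (v ((j + 1) mod (4*n))) e = coord (v j) e)"

text \<open>An immersed grid diagram of size n is
  given by the cyclic vertex sequence g 0, ..., g (2n-1) of its curve: g (2j) are the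
  markings of the first kind, g (2j+1) those of the second kind; g (2j) is joined to
  g (2j+1) by an a-parallel segment (same row) and g (2j+1) to g (2j+2) by a
  b-parallel segment (same column).\<close>
definition grid_diagram :: "nat \<Rightarrow> (nat \<Rightarrow> real \<times> real) \<Rightarrow> bool" where
  "grid_diagram n g \<longleftrightarrow> 0 < n \<and>
     (\<forall>k < 2*n. is_center n (fst (g k)) \<and> is_center n (snd (g k))) \<and>
     (\<forall>j < n. snd (g (2*j+1)) = snd (g (2*j)) \<and>
              fst (g ((2*j+2) mod (2*n))) = fst (g (2*j+1))) \<and>
     (\<forall>i < n. card {j. j < n \<and> snd (g (2*j)) = real i + 1/2} = 1 \<and>
              card {j. j < n \<and> snd (g (2*j+1)) = real i + 1/2} = 1 \<and>
              card {j. j < n \<and> fst (g (2*j)) = real i + 1/2} = 1 \<and>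
              card {j. j < n \<and> fst (g (2*j+1)) = real i + 1/2} = 1)"

definition circ_rep :: "real \<Rightarrow> real" where
  "circ_rep \<theta> = \<theta> - 2*pi * of_int \<lfloor>\<theta> / (2*pi)\<rfloor>"

definition pl_curve :: "nat \<Rightarrow> (nat \<Rightarrow> real \<times> real) \<Rightarrow> real \<Rightarrow> real \<times> real" where
  "pl_curve N g \<theta> =
     (let t = circ_rep \<theta> * real N / (2*pi); j = nat \<lfloor>t\<rfloor>; f = t - real j
      in (1 - f) *\<^sub>R g j + f *\<^sub>R g ((j + 1) mod N))"

definition area_int :: "(real \<Rightarrow> real \<times> real) \<Rightarrow> real \<Rightarrow> real \<Rightarrow> real" where
  "area_int \<gamma> \<theta>0 \<theta>1 = integral {\<theta>0..\<theta>1} (\<lambda>\<theta>. snd (\<gamma> \<theta>) * deriv (\<lambda>t. fst (\<gamma> t)) \<theta>)"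

definition lagrangian_grid :: "nat \<Rightarrow> (nat \<Rightarrow> real \<times> real) \<Rightarrow> bool" where
  "lagrangian_grid n g \<longleftrightarrow> grid_diagram n g \<and>
     area_int (pl_curve (2*n) g) 0 (2*pi) = 0 \<and>
     (\<forall>\<theta>0 \<theta>1. 0 \<le> \<theta>0 \<and> \<theta>0 < \<theta>1 \<and> \<theta>1 < 2*pi \<and>
        pl_curve (2*n) g \<theta>0 = pl_curve (2*n) g \<theta>1 \<longrightarrow>
        area_int (pl_curve (2*n) g) \<theta>0 \<theta>1 \<noteq> 0)"

definition crossing_gap :: "(real \<Rightarrow> real \<times> real) \<Rightarrow> real \<Rightarrow> bool" where
  "crossing_gap \<gamma> d \<longleftrightarrow> (\<exists>\<theta>0 \<theta>1. 0 \<le> \<theta>0 \<and> \<theta>0 < \<theta>1 \<and> \<theta>1 < 2*pi \<and>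
     \<gamma> \<theta>0 = \<gamma> \<theta>1 \<and> d = \<bar>area_int \<gamma> \<theta>0 \<theta>1\<bar>)"

definition proj_wy :: "pt4 \<Rightarrow> real \<times> real" where
  "proj_wy p = (coord p Aw, coord p Ay)"

definition proj_zx :: "pt4 \<Rightarrow> real \<times> real" where
  "proj_zx p = (coord p Az, coord p Ax)"

text \<open>Vertices of G_wy: W markings (first kind, projections of W = Z) and
  X markings (second kind, projections of X = Y).\<close>
definition gwy_vertices :: "nat \<Rightarrow> (nat \<Rightarrow> pt4) \<Rightarrow> nat \<Rightarrow> real \<times> real" where
  "gwy_vertices n v k = proj_wy (v ((2*k) mod (4*n)))"

text \<open>Vertices of G_zx: Y markings (first kind, projections of Y = Z) and
  W markings (second kind, projections of W = X).\<close>
definition gzx_vertices :: "nat \<Rightarrow> (nat \<Rightarrow> pt4) \<Rightarrow> nat \<Rightarrow> real \<times> real" where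
  "gzx_vertices n v k = proj_zx (v ((2*k + 2) mod (4*n)))"

definition gamma_wy :: "nat \<Rightarrow> (nat \<Rightarrow> pt4) \<Rightarrow> real \<Rightarrow> real \<times> real" where
  "gamma_wy n v = pl_curve (2*n) (gwy_vertices n v)"

definition gamma_zx :: "nat \<Rightarrow> (nat \<Rightarrow> pt4) \<Rightarrow> real \<Rightarrow> real \<times> real" where
  "gamma_zx n v = pl_curve (2*n) (gzx_vertices n v)"

definition lagrangian_hypercube :: "nat \<Rightarrow> (label \<Rightarrow> pt4 set) \<Rightarrow> (nat \<Rightarrow> pt4) \<Rightarrow> bool" where
  "lagrangian_hypercube n M v \<longleftrightarrow>
     marking_conditions n M \<and> hc_cycle n M v \<and>
     lagrangian_grid n (gwy_vertices n v) \<and> lagrangian_grid n (gzx_vertices n v) \<and>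
     (\<forall>d. crossing_gap (gamma_zx n v) d \<longrightarrow> \<not> crossing_gap (gamma_wy n v) d)"

text \<open>i(s,u) = (w(u), x(s), y(u), z(s)) where gamma_zx s = (z(s), x(s)) and
  gamma_wy u = (w(u), y(u)); (s,u) in R^2 modulo (2 pi Z)^2.\<close>
definition hc_torus :: "(real \<Rightarrow> real \<times> real) \<Rightarrow> (real \<Rightarrow> real \<times> real) \<Rightarrow> real \<times> real \<Rightarrow> pt4" where
  "hc_torus gzx gwy su = (case su of (s, u) \<Rightarrow>
     (fst (gwy u), snd (gzx s), snd (gwy u), fst (gzx s)))"

definition omega :: "pt4 \<Rightarrow> pt4 \<Rightarrow> real" where
  "omega p q = coord p Aw * coord q Ay - coord p Ay * coord q Aw
             + coord p Az * coord q Ax - coord p Ax * coord q Az"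

end

theory Submission
  imports Defs
begin

text \<open>Parametrised with one unit of time per edge, both grid curves are polylines whose
  edges alternate between horizontal and vertical. No edge is degenerate: a stationary edge
  would be a self-intersection of zero action, which the Lagrangian condition forbids. So two
  consecutive edges are always linearly independent, which makes each curve injective on
  parameter windows shorter than one edge and an immersion away from its finitely many vertices.
  The torus is the product of a curve in the (z,x)-plane and one in the (w,y)-plane. These planes
  are \<open>\<omega>\<close>-orthogonal and \<open>\<omega>\<close> vanishes on every line, so the differential, which
  maps the two coordinate directions into the two planes, spans a Lagrangian plane.\<close>

definition polyline :: "(int \<Rightarrow> 'a::real_normed_vector) \<Rightarrow> real \<Rightarrow> 'a" where
  "polyline p t = p \<lfloor>t\<rfloor> + frac t *\<^sub>R (p (\<lfloor>t\<rfloor> + 1) - p \<lfloor>t\<rfloor>)"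

definition independent_consecutive_edges :: "(int \<Rightarrow> 'a::real_vector) \<Rightarrow> bool" where
  "independent_consecutive_edges p \<longleftrightarrow>
     (\<forall>j a b. a *\<^sub>R (p (j + 1) - p j) + b *\<^sub>R (p (j + 2) - p (j + 1)) = 0 \<longrightarrow> a = 0 \<and> b = 0)"

lemma polyline_on_segment:
  assumes "of_int j \<le> t" "t \<le> of_int j + 1"
  shows "polyline p t = p j + (t - of_int j) *\<^sub>R (p (j + 1) - p j)"
proof (cases "t = of_int j + 1")
  case True
  then show ?thesis by (simp add: polyline_def frac_def algebra_simps)
next
  case False
  with assms have "\<lfloor>t\<rfloor> = j" by (simp add: floor_eq_iff)
  then show ?thesis by (simp add: polyline_def frac_def)
qed

lemma continuous_on_polyline: "continuous_on UNIV (polyline p)"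
proof (rule continuous_at_imp_continuous_on, intro ballI)
  fix t :: real
  define j where "j = \<lfloor>t\<rfloor>"
  have segment: "continuous_on {of_int i..of_int i + 1} (polyline p)" for i
  proof (rule continuous_on_eq)
    show "continuous_on {of_int i..of_int i + 1} (\<lambda>t. p i + (t - of_int i) *\<^sub>R (p (i + 1) - p i))"
      by (intro continuous_intros)
  qed (auto intro!: polyline_on_segment[symmetric])
  have "continuous_on ({of_int (j - 1)..of_int j} \<union> {of_int j..of_int j + 1}) (polyline p)"
    using segment[of "j - 1"] segment[of j] by (intro continuous_on_closed_Un) auto
  moreover have "{of_int (j - 1)..of_int j} \<union> {of_int j..of_int j + 1} = {of_int j - 1..of_int j + (1::real)}"
    by auto
  ultimately have "continuous_on {of_int j - 1..of_int j + (1::real)} (polyline p)"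
    by simp
  moreover have "t \<in> interior {of_int j - 1..of_int j + (1::real)}"
    using j_def by auto linarith+
  ultimately show "isCont (polyline p) t"
    by (rule continuous_on_interior)
qed

lemma polyline_has_vector_derivative:
  assumes "t \<in> {of_int j<..<of_int j + 1}"
  shows "(polyline p has_vector_derivative (p (j + 1) - p j)) (at t)"
proof (rule has_vector_derivative_transform_within_open[where S = "{of_int j<..<of_int j + 1}"])
  show "((\<lambda>t. p j + (t - of_int j) *\<^sub>R (p (j + 1) - p j)) has_vector_derivative (p (j + 1) - p j)) (at t)"
    by (auto intro!: derivative_eq_intros)
qed (use assms in \<open>auto intro!: polyline_on_segment[symmetric]\<close>)

lemma independent_consecutive_edges_nonzero:
  assumes "independent_consecutive_edges p"
  shows "p (j + 1) \<noteq> p j"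
  using assms unfolding independent_consecutive_edges_def
  by (metis add.right_neutral diff_self scaleR_one scaleR_zero_left zero_neq_one)

lemma polyline_inj_short:
  assumes p: "independent_consecutive_edges p"
    and close: "\<bar>t1 - t2\<bar> < 1" and eq: "polyline p t1 = polyline p t2"
  shows "t1 = t2"
proof -
  have ordered: "t1 = t2" if "t1 \<le> t2" "t2 < t1 + 1" "polyline p t1 = polyline p t2" for t1 t2
  proof (rule ccontr)
    assume "t1 \<noteq> t2"
    define j where "j = \<lfloor>t1\<rfloor>"
    have at1: "polyline p t1 = p j + frac t1 *\<^sub>R (p (j + 1) - p j)"
      by (simp add: polyline_def j_def)
    have "\<lfloor>t2\<rfloor> = j \<or> \<lfloor>t2\<rfloor> = j + 1" using that j_def by linarith
    then show False
    proof
      assume "\<lfloor>t2\<rfloor> = j"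
      then have "polyline p t2 = p j + frac t2 *\<^sub>R (p (j + 1) - p j)"
        by (simp add: polyline_def)
      with at1 that(3) have "(frac t1 - frac t2) *\<^sub>R (p (j + 1) - p j) = 0"
        by (simp add: algebra_simps)
      moreover have "frac t1 \<noteq> frac t2"
        using \<open>t1 \<noteq> t2\<close> \<open>\<lfloor>t2\<rfloor> = j\<close> j_def by (auto simp: frac_def)
      ultimately show False using independent_consecutive_edges_nonzero[OF p] by simp
    next
      assume "\<lfloor>t2\<rfloor> = j + 1"
      then have "polyline p t2 = p (j + 1) + frac t2 *\<^sub>R (p (j + 2) - p (j + 1))"
        by (simp add: polyline_def add.assoc)
      with at1 that(3)
      have "(frac t1 - 1) *\<^sub>R (p (j + 1) - p j) + (- frac t2) *\<^sub>R (p (j + 2) - p (j + 1)) = 0"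
        by (simp add: algebra_simps)
      with p have "frac t1 - 1 = 0"
        unfolding independent_consecutive_edges_def by blast
      then show False using frac_lt_1[of t1] by simp
    qed
  qed
  show ?thesis
  proof (cases "t1 \<le> t2")
    case True
    moreover from close have "t2 < t1 + 1" by linarith
    ultimately show ?thesis using eq by (rule ordered)
  next
    case False
    then have "t2 \<le> t1" by simp
    moreover from close have "t1 < t2 + 1" by linarith
    ultimately have "t2 = t1" using eq[symmetric] by (rule ordered)
    then show ?thesis by simp
  qed
qed

definition cyclic_vertices :: "nat \<Rightarrow> (nat \<Rightarrow> 'a) \<Rightarrow> int \<Rightarrow> 'a" where
  "cyclic_vertices N g j = g (nat (j mod int N))"

lemma cyclic_vertices_add_multiple: "cyclic_vertices N g (j + int N * m) = cyclic_vertices N g j"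
  by (simp add: cyclic_vertices_def)

lemma cyclic_vertices_of_nat: "k < N \<Longrightarrow> cyclic_vertices N g (int k) = g k"
  by (simp add: cyclic_vertices_def)

lemma cyclic_vertices_of_nat_succ: "cyclic_vertices N g (int k + 1) = g ((k + 1) mod N)"
proof -
  have "(int k + 1) mod int N = int ((k + 1) mod N)" by (simp add: zmod_int add.commute)
  then show ?thesis by (simp add: cyclic_vertices_def)
qed

lemma cyclic_vertices_succ:
  assumes "0 < N"
  shows "cyclic_vertices N g (j + 1) = g ((nat (j mod int N) + 1) mod N)"
proof -
  have "int (nat (j mod int N)) = j mod int N" using assms by simp
  then have "cyclic_vertices N g (j + 1) = cyclic_vertices N g (int (nat (j mod int N)) + 1)"
    by (simp add: cyclic_vertices_def mod_add_left_eq)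
  then show ?thesis by (simp only: cyclic_vertices_of_nat_succ)
qed

lemma polyline_cyclic_vertices_add_multiple:
  "polyline (cyclic_vertices N g) (t + of_int (int N * m)) = polyline (cyclic_vertices N g) t"
proof -
  have "\<lfloor>t + of_int (int N * m)\<rfloor> = \<lfloor>t\<rfloor> + int N * m" by (simp only: floor_add_int)
  moreover have "\<lfloor>t\<rfloor> + int N * m + 1 = (\<lfloor>t\<rfloor> + 1) + int N * m" by simp
  ultimately show ?thesis
    by (simp only: polyline_def frac_add_of_int_right cyclic_vertices_add_multiple)
qed

lemma circ_rep_eq_frac: "circ_rep \<theta> = 2*pi * frac (\<theta> / (2*pi))"
  by (simp add: circ_rep_def frac_def algebra_simps)

lemma circ_rep_bounds: "0 \<le> circ_rep \<theta>" "circ_rep \<theta> < 2*pi"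
  by (simp_all add: circ_rep_eq_frac frac_lt_1)

lemma circ_rep_add_period: "circ_rep (\<theta> + 2*pi) = circ_rep \<theta>"
proof -
  have "(\<theta> + 2*pi) / (2*pi) = \<theta> / (2*pi) + of_int 1" by (simp add: field_simps)
  then show ?thesis by (simp only: circ_rep_eq_frac frac_add_of_int_right)
qed

lemma pl_curve_add_period: "pl_curve N g (\<theta> + 2*pi) = pl_curve N g \<theta>"
  by (simp add: pl_curve_def circ_rep_add_period)

lemma pl_curve_eq_polyline:
  assumes "0 < N"
  shows "pl_curve N g \<theta> = polyline (cyclic_vertices N g) (\<theta> * real N / (2*pi))"
proof -
  define t where "t = circ_rep \<theta> * real N / (2*pi)"
  define m where "m = \<lfloor>\<theta> / (2*pi)\<rfloor>"
  define j where "j = nat \<lfloor>t\<rfloor>"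
  have t_bounds: "0 \<le> t" "t < real N"
    using circ_rep_bounds[of \<theta>] assms by (simp_all add: t_def field_simps)
  then have floor_t: "\<lfloor>t\<rfloor> = int j"
    by (simp add: j_def)
  from t_bounds(2) have "\<lfloor>t\<rfloor> < int N"
    by (simp add: floor_less_iff)
  then have "j < N"
    by (simp add: floor_t)
  have "pl_curve N g \<theta> = g j + (t - real j) *\<^sub>R (g ((j + 1) mod N) - g j)"
    by (simp add: pl_curve_def Let_def t_def j_def algebra_simps)
  also have "\<dots> = polyline (cyclic_vertices N g) t"
    using \<open>j < N\<close> by (simp add: polyline_def frac_def floor_t cyclic_vertices_of_nat
      cyclic_vertices_of_nat_succ)
  also have "\<dots> = polyline (cyclic_vertices N g) (t + of_int (int N * m))"
    by (rule polyline_cyclic_vertices_add_multiple[symmetric])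
  also have "t + of_int (int N * m) = \<theta> * real N / (2*pi)"
    by (simp add: t_def m_def circ_rep_def field_simps)
  finally show ?thesis .
qed

lemma area_int_eq_0_if_constant:
  assumes "\<And>\<theta>. \<theta> \<in> {a..b} \<Longrightarrow> \<gamma> \<theta> = c"
  shows "area_int \<gamma> a b = 0"
proof -
  have "deriv (\<lambda>t. fst (\<gamma> t)) \<theta> = 0" if "\<theta> \<in> {a<..<b}" for \<theta>
  proof (rule DERIV_imp_deriv)
    show "((\<lambda>t. fst (\<gamma> t)) has_field_derivative 0) (at \<theta>)"
      by (rule has_field_derivative_transform_within_open[of "\<lambda>_. fst c" _ _ "{a<..<b}"])
         (use that assms in auto)
  qed
  then have "area_int \<gamma> a b = integral {a..b} (\<lambda>_. 0::real)"
    unfolding area_int_def by (intro integral_spike[of "{a, b}"]) auto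
  then show ?thesis by simp
qed

lemma lagrangian_grid_edge_nondegenerate:
  assumes L: "lagrangian_grid n g" and k: "k < 2*n"
  shows "g ((k + 1) mod (2*n)) \<noteq> g k"
proof
  assume degenerate: "g ((k + 1) mod (2*n)) = g k"
  define N where "N = 2*n"
  have N: "0 < N" using k by (simp add: N_def)
  define \<theta>0 where "\<theta>0 = 2*pi * real k / real N"
  define \<theta>1 where "\<theta>1 = 2*pi * (real k + 1/2) / real N"
  have stationary: "pl_curve N g \<theta> = g k" if "\<theta> \<in> {\<theta>0..\<theta>1}" for \<theta>
  proof -
    define t where "t = \<theta> * real N / (2*pi)"
    have "of_int (int k) \<le> t" "t \<le> of_int (int k) + 1"
      using that N by (auto simp: t_def \<theta>0_def \<theta>1_def field_simps)
    then have "pl_curve N g \<theta> = cyclic_vertices N g (int k)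
        + (t - of_int (int k)) *\<^sub>R (cyclic_vertices N g (int k + 1) - cyclic_vertices N g (int k))"
      unfolding pl_curve_eq_polyline[OF N] t_def[symmetric] by (rule polyline_on_segment)
    also have "cyclic_vertices N g (int k + 1) = cyclic_vertices N g (int k)"
      using degenerate k by (simp add: cyclic_vertices_of_nat cyclic_vertices_of_nat_succ N_def)
    finally show ?thesis
      using k by (simp add: cyclic_vertices_of_nat N_def)
  qed
  have "0 \<le> \<theta>0" "\<theta>0 < \<theta>1"
    using N by (simp_all add: \<theta>0_def \<theta>1_def divide_strict_right_mono)
  moreover have "\<theta>1 < 2*pi"
  proof -
    have "real k + 1/2 < real N" using k by (simp add: N_def)
    then show ?thesis using N by (simp add: \<theta>1_def divide_less_eq)
  qed
  moreover have "pl_curve N g \<theta>0 = pl_curve N g \<theta>1"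
    using stationary calculation(2) by simp
  ultimately have "area_int (pl_curve N g) \<theta>0 \<theta>1 \<noteq> 0"
    using L by (auto simp: lagrangian_grid_def N_def)
  moreover have "area_int (pl_curve N g) \<theta>0 \<theta>1 = 0"
    using stationary by (rule area_int_eq_0_if_constant)
  ultimately show False by simp
qed

lemma grid_diagram_even_edge_horizontal:
  assumes "grid_diagram n g" "even k" "k < 2*n"
  shows "snd (g ((k + 1) mod (2*n))) = snd (g k)"
proof -
  obtain i where "k = 2*i" using \<open>even k\<close> by blast
  with assms show ?thesis by (simp add: grid_diagram_def)
qed

lemma grid_diagram_odd_edge_vertical:
  assumes "grid_diagram n g" "odd k" "k < 2*n"
  shows "fst (g ((k + 1) mod (2*n))) = fst (g k)"
proof -
  obtain i where "k = 2*i + 1" using \<open>odd k\<close> by (blast elim: oddE)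
  with assms show ?thesis by (simp add: grid_diagram_def)
qed

lemma independent_consecutive_edges_if_alternating:
  fixes p :: "int \<Rightarrow> real \<times> real"
  assumes nondegenerate: "\<And>j. p (j + 1) \<noteq> p j"
    and horizontal: "\<And>j. even j \<Longrightarrow> snd (p (j + 1)) = snd (p j)"
    and vertical: "\<And>j. odd j \<Longrightarrow> fst (p (j + 1)) = fst (p j)"
  shows "independent_consecutive_edges p"
  unfolding independent_consecutive_edges_def
proof (intro allI impI)
  fix j and a b :: real
  assume dependent: "a *\<^sub>R (p (j + 1) - p j) + b *\<^sub>R (p (j + 2) - p (j + 1)) = 0"
  have j2: "j + 2 = (j + 1) + 1" by simp
  show "a = 0 \<and> b = 0"
  proof (cases "even j")
    case True
    then have "fst (p (j + 1)) \<noteq> fst (p j)" "snd (p (j + 2)) \<noteq> snd (p (j + 1))"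
      using nondegenerate[of j] nondegenerate[of "j + 1"] horizontal[of j] vertical[of "j + 1"]
      by (auto simp: prod_eq_iff j2)
    with dependent True horizontal[of j] vertical[of "j + 1"] show ?thesis
      by (auto simp: prod_eq_iff j2)
  next
    case False
    then have "snd (p (j + 1)) \<noteq> snd (p j)" "fst (p (j + 2)) \<noteq> fst (p (j + 1))"
      using nondegenerate[of j] nondegenerate[of "j + 1"] vertical[of j] horizontal[of "j + 1"]
      by (auto simp: prod_eq_iff j2)
    with dependent False vertical[of j] horizontal[of "j + 1"] show ?thesis
      by (auto simp: prod_eq_iff j2)
  qed
qed

lemma lagrangian_grid_independent_consecutive_edges:
  assumes L: "lagrangian_grid n g"
  shows "independent_consecutive_edges (cyclic_vertices (2*n) g)"
proof (rule independent_consecutive_edges_if_alternating)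
  have G: "grid_diagram n g" and N: "0 < 2*n"
    using L by (simp_all add: lagrangian_grid_def grid_diagram_def)
  fix j :: int
  define k where "k = nat (j mod int (2*n))"
  have k: "k < 2*n" and "int k = j mod int (2*n)"
    using N by (simp_all add: k_def nat_less_iff)
  then have parity: "even k \<longleftrightarrow> even j"
    by (metis dvd_mod_iff even_mult_iff even_numeral even_of_nat)
  have at_j: "cyclic_vertices (2*n) g j = g k" and at_succ: "cyclic_vertices (2*n) g (j + 1) = g ((k + 1) mod (2*n))"
    using cyclic_vertices_succ[OF N] by (simp_all add: cyclic_vertices_def k_def)
  show "cyclic_vertices (2*n) g (j + 1) \<noteq> cyclic_vertices (2*n) g j"
    unfolding at_j at_succ by (rule lagrangian_grid_edge_nondegenerate[OF L k])
  show "snd (cyclic_vertices (2*n) g (j + 1)) = snd (cyclic_vertices (2*n) g j)" if "even j"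
    unfolding at_j at_succ using grid_diagram_even_edge_horizontal[OF G _ k] that parity by simp
  show "fst (cyclic_vertices (2*n) g (j + 1)) = fst (cyclic_vertices (2*n) g j)" if "odd j"
    unfolding at_j at_succ using grid_diagram_odd_edge_vertical[OF G _ k] that parity by simp
qed

lemma continuous_on_pl_curve:
  assumes "0 < N"
  shows "continuous_on UNIV (pl_curve N g)"
proof -
  have "continuous_on UNIV (\<lambda>\<theta>. polyline (cyclic_vertices N g) (\<theta> * real N / (2*pi)))"
    by (rule continuous_on_compose2[OF continuous_on_polyline]) (auto intro!: continuous_intros)
  then show ?thesis
    using assms by (simp add: pl_curve_eq_polyline)
qed

lemma pl_curve_inj_short:
  assumes N: "0 < N" and p: "independent_consecutive_edges (cyclic_vertices N g)"
    and close: "\<bar>\<theta>1 - \<theta>2\<bar> < 2*pi / real N" and eq: "pl_curve N g \<theta>1 = pl_curve N g \<theta>2"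
  shows "\<theta>1 = \<theta>2"
proof -
  define c where "c = real N / (2*pi)"
  have c: "0 < c" using N by (simp add: c_def)
  have "\<bar>\<theta>1 * c - \<theta>2 * c\<bar> = \<bar>\<theta>1 - \<theta>2\<bar> * c"
    using c by (simp add: abs_mult left_diff_distrib[symmetric])
  also have "\<dots> < 2*pi / real N * c" using close c by (intro mult_strict_right_mono)
  also have "\<dots> = 1" using N by (simp add: c_def)
  finally have "\<bar>\<theta>1 * c - \<theta>2 * c\<bar> < 1" .
  moreover have "polyline (cyclic_vertices N g) (\<theta>1 * c) = polyline (cyclic_vertices N g) (\<theta>2 * c)"
    using eq by (simp add: pl_curve_eq_polyline[OF N] c_def)
  ultimately have "\<theta>1 * c = \<theta>2 * c" by (rule polyline_inj_short[OF p])
  then show ?thesis using c by simp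
qed

lemma circ_rep_in_vertex_times:
  assumes N: "0 < N" and "\<theta> * real N / (2*pi) \<in> \<int>"
  shows "circ_rep \<theta> \<in> (\<lambda>k. 2*pi * real k / real N) ` {..<N}"
proof -
  define x where "x = \<theta> / (2*pi)"
  have "real N * frac x = \<theta> * real N / (2*pi) - of_int (int N * \<lfloor>x\<rfloor>)"
    by (simp add: frac_def x_def algebra_simps)
  then have "real N * frac x \<in> \<int>" using assms(2) by simp
  then obtain k where k: "real N * frac x = of_int k" by (elim Ints_cases)
  have "0 \<le> real N * frac x" by simp
  then have "0 \<le> k" using k by simp
  have "real N * frac x < real N * 1"
    using N frac_lt_1[of x] by (intro mult_strict_left_mono) simp_all
  then have "k < int N" using k by simp
  have "circ_rep \<theta> = 2*pi * (real N * frac x) / real N"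
    using N by (simp add: circ_rep_eq_frac x_def)
  then have "circ_rep \<theta> = 2*pi * real (nat k) / real N"
    using k \<open>0 \<le> k\<close> by simp
  moreover have "nat k < N" using \<open>k < int N\<close> \<open>0 \<le> k\<close> by (simp add: nat_less_iff)
  ultimately show ?thesis by blast
qed

lemma pl_curve_has_nonzero_velocity:
  assumes N: "0 < N" and p: "independent_consecutive_edges (cyclic_vertices N g)"
    and regular: "circ_rep \<theta> \<notin> (\<lambda>k. 2*pi * real k / real N) ` {..<N}"
  shows "\<exists>d. d \<noteq> 0 \<and> (pl_curve N g has_vector_derivative d) (at \<theta>)"
proof -
  define c where "c = real N / (2*pi)"
  define j where "j = \<lfloor>\<theta> * c\<rfloor>"
  define e where "e = cyclic_vertices N g (j + 1) - cyclic_vertices N g j"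
  have "\<theta> * c \<notin> \<int>"
    using circ_rep_in_vertex_times[OF N] regular by (auto simp: c_def)
  then have "of_int j \<noteq> \<theta> * c" by (metis Ints_of_int)
  moreover have "of_int j \<le> \<theta> * c" "\<theta> * c < of_int j + 1"
    by (simp_all add: j_def)
  ultimately have "\<theta> * c \<in> {of_int j<..<of_int j + 1}"
    by simp
  then have "(polyline (cyclic_vertices N g) has_vector_derivative e) (at (\<theta> * c))"
    unfolding e_def by (rule polyline_has_vector_derivative)
  then have "(polyline (cyclic_vertices N g) \<circ> (\<lambda>\<theta>. \<theta> * c) has_vector_derivative c *\<^sub>R e) (at \<theta>)"
    by (intro vector_diff_chain_at) (auto intro!: derivative_eq_intros)
  moreover have "polyline (cyclic_vertices N g) \<circ> (\<lambda>\<theta>. \<theta> * c) = pl_curve N g"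
    using N by (simp add: fun_eq_iff pl_curve_eq_polyline c_def)
  moreover have "c *\<^sub>R e \<noteq> 0"
    using N independent_consecutive_edges_nonzero[OF p] by (simp add: c_def e_def)
  ultimately have "(pl_curve N g has_vector_derivative c *\<^sub>R e) (at \<theta>)" "c *\<^sub>R e \<noteq> 0"
    by simp_all
  then show ?thesis by blast
qed

lemma hc_torus_eq: "hc_torus A B = (\<lambda>p. (fst (B (snd p)), snd (A (fst p)), snd (B (snd p)), fst (A (fst p))))"
  by (simp add: fun_eq_iff hc_torus_def split: prod.splits)

lemma proj_zx_hc_torus: "proj_zx (hc_torus A B p) = A (fst p)"
  by (simp add: hc_torus_eq proj_zx_def coord_def)

lemma proj_wy_hc_torus: "proj_wy (hc_torus A B p) = B (snd p)"
  by (simp add: hc_torus_eq proj_wy_def coord_def)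

lemma continuous_on_hc_torus:
  assumes "continuous_on UNIV A" "continuous_on UNIV B"
  shows "continuous_on UNIV (hc_torus A B)"
proof -
  have "continuous_on UNIV (\<lambda>p::real \<times> real. A (fst p))" "continuous_on UNIV (\<lambda>p::real \<times> real. B (snd p))"
    by (rule continuous_on_compose2[OF assms(1)] continuous_on_compose2[OF assms(2)];
        auto intro: continuous_intros)+
  then show ?thesis
    unfolding hc_torus_eq by (intro continuous_intros)
qed

lemma inj_on_hc_torus_ball:
  assumes A: "\<And>s1 s2. \<bar>s1 - s2\<bar> < d \<Longrightarrow> A s1 = A s2 \<Longrightarrow> s1 = s2"
    and B: "\<And>u1 u2. \<bar>u1 - u2\<bar> < d \<Longrightarrow> B u1 = B u2 \<Longrightarrow> u1 = u2"
  shows "inj_on (hc_torus A B) (ball p (d / 2))"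
proof (rule inj_onI)
  fix x y assume "x \<in> ball p (d / 2)" "y \<in> ball p (d / 2)" and eq: "hc_torus A B x = hc_torus A B y"
  then have "dist x y < d / 2 + d / 2"
    by (metis dist_commute dist_triangle_less_add mem_ball)
  then have "dist x y < d" by simp
  then have "\<bar>fst x - fst y\<bar> < d" "\<bar>snd x - snd y\<bar> < d"
    using dist_fst_le[of x y] dist_snd_le[of x y] by (simp_all add: dist_real_def)
  moreover have "A (fst x) = A (fst y)" "B (snd x) = B (snd y)"
    using arg_cong[OF eq, of proj_zx] arg_cong[OF eq, of proj_wy]
    by (simp_all only: proj_zx_hc_torus proj_wy_hc_torus)
  ultimately show "x = y" using A B by (simp add: prod_eq_iff)
qed

lemma hc_torus_lagrangian_immersion_at:
  assumes A: "(A has_vector_derivative a) (at s)" and B: "(B has_vector_derivative b) (at u)"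
    and "a \<noteq> 0" "b \<noteq> 0"
  shows "\<exists>D. (hc_torus A B has_derivative D) (at (s, u)) \<and> inj D \<and> (\<forall>x y. omega (D x) (D y) = 0)"
proof (intro exI conjI allI)
  define D where "D = (\<lambda>(h, k). (k * fst b, h * snd a, k * snd b, h * fst a))"
  have "(A has_derivative (\<lambda>h. h *\<^sub>R a)) (at (fst (s, u)))"
    using A by (simp add: has_vector_derivative_def)
  from has_derivative_compose[OF has_derivative_fst[OF has_derivative_ident] this]
  have "((\<lambda>p. A (fst p)) has_derivative (\<lambda>p. fst p *\<^sub>R a)) (at (s, u))" .
  moreover have "(B has_derivative (\<lambda>h. h *\<^sub>R b)) (at (snd (s, u)))"
    using B by (simp add: has_vector_derivative_def)
  from has_derivative_compose[OF has_derivative_snd[OF has_derivative_ident] this]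
  have "((\<lambda>p. B (snd p)) has_derivative (\<lambda>p. snd p *\<^sub>R b)) (at (s, u))" .
  ultimately show "(hc_torus A B has_derivative D) (at (s, u))"
    unfolding hc_torus_eq
    by (auto intro!: derivative_eq_intros simp: D_def fun_eq_iff split: prod.splits)
  show "inj D"
    using assms(3,4) by (auto intro!: injI simp: D_def prod_eq_iff)
  show "omega (D x) (D y) = 0" for x y
    by (simp add: D_def omega_def coord_def split: prod.splits)
qed

theorem theorem5p1:
  fixes n :: nat and M :: "label \<Rightarrow> pt4 set" and v :: "nat \<Rightarrow> pt4"
  assumes "lagrangian_hypercube n M v"
  defines "i \<equiv> hc_torus (gamma_zx n v) (gamma_wy n v)"
  shows "continuous_on UNIV i
    \<and> (\<forall>s u. i (s + 2*pi, u) = i (s, u) \<and> i (s, u + 2*pi) = i (s, u))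
    \<and> (\<forall>p. \<exists>e>0. inj_on i (ball p e))
    \<and> (\<exists>S U. finite S \<and> finite U \<and>
         (\<forall>s u. circ_rep s \<notin> S \<and> circ_rep u \<notin> U \<longrightarrow>
            (\<exists>D. (i has_derivative D) (at (s, u)) \<and> inj D \<and>
                 (\<forall>a b. omega (D a) (D b) = 0))))
    \<and> (\<forall>s. proj_zx (i (s, 0)) = gamma_zx n v s)
    \<and> (\<forall>u. proj_wy (i (0, u)) = gamma_wy n v u)"
proof -
  have Lzx: "lagrangian_grid n (gzx_vertices n v)" and Lwy: "lagrangian_grid n (gwy_vertices n v)"
    using assms(1) by (simp_all add: lagrangian_hypercube_def)
  then have N: "0 < 2*n" by (simp add: lagrangian_grid_def grid_diagram_def)
  note zx = lagrangian_grid_independent_consecutive_edges[OF Lzx]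
  note wy = lagrangian_grid_independent_consecutive_edges[OF Lwy]
  define S where "S = (\<lambda>k. 2*pi * real k / real (2*n)) ` {..<2*n}"
  have continuity: "continuous_on UNIV i"
    unfolding i_def gamma_zx_def gamma_wy_def
    by (intro continuous_on_hc_torus continuous_on_pl_curve N)
  have periodicity: "i (s + 2*pi, u) = i (s, u) \<and> i (s, u + 2*pi) = i (s, u)" for s u
    by (simp add: i_def hc_torus_def gamma_zx_def gamma_wy_def pl_curve_add_period)
  have local_injectivity: "inj_on i (ball p (2*pi / real (2*n) / 2))" for p
    unfolding i_def gamma_zx_def gamma_wy_def
    by (rule inj_on_hc_torus_ball[OF pl_curve_inj_short[OF N zx] pl_curve_inj_short[OF N wy]])
  have immersion: "\<exists>D. (i has_derivative D) (at (s, u)) \<and> inj D \<and> (\<forall>a b. omega (D a) (D b) = 0)"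
    if regular: "circ_rep s \<notin> S" "circ_rep u \<notin> S" for s u
  proof -
    obtain a where "a \<noteq> 0" "(pl_curve (2*n) (gzx_vertices n v) has_vector_derivative a) (at s)"
      using pl_curve_has_nonzero_velocity[OF N zx regular(1)[unfolded S_def]] by blast
    moreover obtain b where "b \<noteq> 0" "(pl_curve (2*n) (gwy_vertices n v) has_vector_derivative b) (at u)"
      using pl_curve_has_nonzero_velocity[OF N wy regular(2)[unfolded S_def]] by blast
    ultimately show ?thesis
      unfolding i_def gamma_zx_def gamma_wy_def by (intro hc_torus_lagrangian_immersion_at)
  qed
  have projections: "proj_zx (i (s, 0)) = gamma_zx n v s" "proj_wy (i (0, u)) = gamma_wy n v u" for s u
    by (simp_all add: i_def proj_zx_hc_torus proj_wy_hc_torus)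
  have "0 < 2*pi / real (2*n) / 2" "finite S"
    using N by (simp_all add: S_def)
  then show ?thesis
    using continuity periodicity local_injectivity immersion projections
    by (intro conjI allI exI[of _ S]) blast+
qed

end
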